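(* Let $G$ and $H$ be undirected graphs with nonnegative edge weights on the same vertex set of $n$ vertices, with adjacency matrices $A_G,A_H$, degree matrices $D_G,D_H$, and Laplacian matrices $L_G=D_G-A_G$ and $L_H=D_H-A_H$. Then \[ \|A_G-A_H\|\leq\sqrt{n}\,\|L_G-L_H\|, \] where $\|\cdot\|$ denotes the spectral (2-)norm.
   Context: For a graph $G$ on vertices $v_1,\dots,v_n$ with edge weights $w_{ij}\geq0$ (and $w_{ij}=0$ for non-edges), $(A_G)_{ij}=w_{ij}$ for $i\neq j$, $(A_G)_{ii}=0$, and $D_G$ is diagonal with $(D_G)_{ii}=\sum_j w_{ij}$. *)

theory Defs
  imports "HOL-Analysis.Analysis"
begin

text \<open>A weighted graph on the finite vertex type 'n is given by its weight function
  w :: 'n => 'n => real (w i j = 0 for non-edges).\<close>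

definition adj_mat :: "('n::finite \<Rightarrow> 'n \<Rightarrow> real) \<Rightarrow> real^'n^'n" where
  "adj_mat w = (\<chi> i j. if i = j then 0 else w i j)"

definition deg_mat :: "('n::finite \<Rightarrow> 'n \<Rightarrow> real) \<Rightarrow> real^'n^'n" where
  "deg_mat w = (\<chi> i j. if i = j then (\<Sum>k\<in>UNIV. w i k) else 0)"

definition lap_mat :: "('n::finite \<Rightarrow> 'n \<Rightarrow> real) \<Rightarrow> real^'n^'n" where
  "lap_mat w = deg_mat w - adj_mat w"

definition spec_norm :: "real^'n::finite^'m::finite \<Rightarrow> real" where
  "spec_norm M = onorm (\<lambda>x. M *v x)"

end

theory Submission
  imports Defs
begin

text \<open>Off the diagonal \<open>L\<^sub>G - L\<^sub>H = -(A\<^sub>G - A\<^sub>H)\<close>, and \<open>A\<^sub>G - A\<^sub>H\<close> vanishes on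
  the diagonal, so the Frobenius norm (the library norm on \<open>real^'n^'m\<close>) of \<open>A\<^sub>G - A\<^sub>H\<close> is
  at most that of \<open>L\<^sub>G - L\<^sub>H\<close>. The Frobenius norm dominates the spectral norm (Cauchy-Schwarz
  row by row) and is at most \<open>\<surd>n\<close> times it, as each of the \<open>n\<close> columns has norm at most
  the spectral norm.\<close>

lemma norm_vec_mono:
  fixes x y :: "'a::real_normed_vector^'n"
  assumes "\<And>i. norm (x $ i) \<le> norm (y $ i)"
  shows "norm x \<le> norm y"
  unfolding norm_vec_def by (rule L2_set_mono) (simp_all add: assms)

lemma norm_transpose: "norm (transpose M) = norm (M :: real^'n^'m)"
proof -
  have "transpose M \<bullet> transpose M = M \<bullet> M"
    unfolding inner_vec_def transpose_def by (simp add: sum.swap [of _ "UNIV :: 'n set"])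
  then show ?thesis
    by (simp add: norm_eq_sqrt_inner)
qed

lemma norm_matrix_vector_mult_le: "norm (M *v x) \<le> norm M * norm (x :: real^'n)"
proof -
  have "norm (M *v x) = L2_set (\<lambda>i. \<bar>M $ i \<bullet> x\<bar>) UNIV"
    by (simp add: norm_vec_def matrix_mult_dot)
  also have "\<dots> \<le> L2_set (\<lambda>i. norm (M $ i) * norm x) UNIV"
    by (rule L2_set_mono) (simp_all add: Cauchy_Schwarz_ineq2)
  also have "\<dots> = norm M * norm x"
    by (simp add: L2_set_left_distrib norm_vec_def)
  finally show ?thesis .
qed

lemma onorm_matrix_le_norm: "onorm ((*v) M) \<le> norm (M :: real^'n^'m)"
  by (rule onorm_le) (rule norm_matrix_vector_mult_le)

lemma norm_matrix_le_onorm: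
  "norm (M :: real^'n^'m) \<le> sqrt (real CARD('n)) * onorm ((*v) M)"
proof -
  have "norm M = norm (transpose M)"
    by (rule norm_transpose [symmetric])
  also have "\<dots> = L2_set (\<lambda>j. norm (column j M)) UNIV"
    by (simp add: norm_vec_def transpose_def column_def)
  also have "\<dots> \<le> L2_set (\<lambda>j. onorm ((*v) M)) (UNIV :: 'n set)"
    by (rule L2_set_mono) (simp_all add: norm_column_le_onorm)
  also have "\<dots> = sqrt (real CARD('n)) * onorm ((*v) M)"
    by (simp add: L2_set_constant onorm_pos_le)
  finally show ?thesis .
qed

lemma adj_mat_diff_entry_le_lap_mat_diff_entry:
  "\<bar>(adj_mat v - adj_mat w) $ i $ j\<bar> \<le> \<bar>(lap_mat v - lap_mat w) $ i $ j\<bar>"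
  by (simp add: adj_mat_def lap_mat_def deg_mat_def abs_minus_commute)

lemma norm_adj_mat_diff_le_norm_lap_mat_diff:
  "norm (adj_mat v - adj_mat w) \<le> norm (lap_mat v - lap_mat w)"
  by (intro norm_vec_mono) (simp only: real_norm_def adj_mat_diff_entry_le_lap_mat_diff_entry)

theorem lemma2:
  fixes wG wH :: "'n::finite \<Rightarrow> 'n \<Rightarrow> real"
  assumes "\<And>i j. wG i j \<ge> 0" and "\<And>i j. wG i j = wG j i" and "\<And>i. wG i i = 0"
      and "\<And>i j. wH i j \<ge> 0" and "\<And>i j. wH i j = wH j i" and "\<And>i. wH i i = 0"
  shows "spec_norm (adj_mat wG - adj_mat wH)
           \<le> sqrt (real CARD('n)) * spec_norm (lap_mat wG - lap_mat wH)"
proof -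
  have "spec_norm (adj_mat wG - adj_mat wH) \<le> norm (adj_mat wG - adj_mat wH)"
    unfolding spec_norm_def by (rule onorm_matrix_le_norm)
  also have "\<dots> \<le> norm (lap_mat wG - lap_mat wH)"
    by (rule norm_adj_mat_diff_le_norm_lap_mat_diff)
  also have "\<dots> \<le> sqrt (real CARD('n)) * spec_norm (lap_mat wG - lap_mat wH)"
    unfolding spec_norm_def by (rule norm_matrix_le_onorm)
  finally show ?thesis .
qed

end
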